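(* Let $0<m\le n$ and let $S\subset\Delta^n$ be the union of $m$ of the codimension-one faces of the $n$-simplex $\Delta^n$. Then the inclusion $S\hookrightarrow\Delta^n$ is an $m$-expansion.
   Context: $\Lambda^p_i=\bigcup_{j\ne i}\partial_j\Delta^p$ is the horn. For $m>0$, an inclusion of simplicial sets $S\hookrightarrow T$ is an $m$-expansion if there is a filtration $S=F_{-1}T\subset F_0T\subset F_1T\subset\cdots$ with $T=\bigcup_\ell F_\ell T$, a weakly monotone sequence $n_\ell\ge m$ ($\ell\ge0$), indices $0\le i_\ell\le n_\ell$, and maps $x_\ell:\Delta^{n_\ell}\to F_\ell T$, $y_\ell:\Lambda^{n_\ell}_{i_\ell}\to F_{\ell-1}T$ making $F_\ell T$ the pushout of $F_{\ell-1}T\leftarrow\Lambda^{n_\ell}_{i_\ell}\hookrightarrow\Delta^{n_\ell}$. *)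

theory Defs
  imports Main "HOL-Library.Extended_Nat"
begin

text \<open>A k-simplex of Delta^p is a weakly increasing list [v0,...,vk] of vertices
  in {0..p} (i.e. a monotone map [k] -> [p]); its dimension is length - 1.\<close>

definition simplices :: "nat \<Rightarrow> nat list set" where
  "simplices p = {xs. xs \<noteq> [] \<and> sorted xs \<and> set xs \<subseteq> {0..p}}"

definition mono_map :: "nat \<Rightarrow> nat \<Rightarrow> (nat \<Rightarrow> nat) \<Rightarrow> bool" where
  "mono_map m k \<theta> \<longleftrightarrow> (\<forall>i j. i \<le> j \<and> j \<le> m \<longrightarrow> \<theta> i \<le> \<theta> j) \<and> (\<forall>i\<le>m. \<theta> i \<le> k)"

definition act :: "(nat \<Rightarrow> nat) \<Rightarrow> nat \<Rightarrow> nat list \<Rightarrow> nat list" where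
  "act \<theta> m xs = map (\<lambda>i. xs ! \<theta> i) [0..<Suc m]"

definition sub_sset :: "nat \<Rightarrow> nat list set \<Rightarrow> bool" where
  "sub_sset p X \<longleftrightarrow> X \<subseteq> simplices p \<and>
     (\<forall>xs\<in>X. \<forall>m \<theta>. mono_map m (length xs - 1) \<theta> \<longrightarrow> act \<theta> m xs \<in> X)"

definition ssmap :: "nat list set \<Rightarrow> nat list set \<Rightarrow> (nat list \<Rightarrow> nat list) \<Rightarrow> bool" where
  "ssmap A B f \<longleftrightarrow> (\<forall>xs\<in>A. f xs \<in> B \<and> length (f xs) = length xs) \<and>
     (\<forall>xs\<in>A. \<forall>m \<theta>. mono_map m (length xs - 1) \<theta> \<longrightarrow> f (act \<theta> m xs) = act \<theta> m (f xs))"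

definition face :: "nat \<Rightarrow> nat \<Rightarrow> nat list set" where
  "face p j = {xs \<in> simplices p. j \<notin> set xs}"

definition horn :: "nat \<Rightarrow> nat \<Rightarrow> nat list set" where
  "horn p i = (\<Union>j\<in>{0..p} - {i}. face p j)"

text \<open>Pushout square  C <-g- A \<subseteq> B -h-> P  with C \<subseteq> P the inclusion.
  Pushouts of simplicial sets are computed degreewise; in each degree the
  square is a pushout of sets iff the induced map from C \<Squnion> B onto P is
  surjective with kernel the equivalence relation generated by g a ~ a.
  (All maps preserve dimension, so stating it for all degrees at once is the
  same as stating it degreewise.)\<close>
definition is_pushout ::
  "nat list set \<Rightarrow> nat list set \<Rightarrow> nat list set \<Rightarrow> nat list set \<Rightarrow>
   (nat list \<Rightarrow> nat list) \<Rightarrow> (nat list \<Rightarrow> nat list) \<Rightarrow> bool" where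
  "is_pushout A B C P g h \<longleftrightarrow>
     A \<subseteq> B \<and> C \<subseteq> P \<and> (\<forall>a\<in>A. h a = g a) \<and> P = C \<union> h ` B \<and>
     (\<forall>u\<in>C <+> B. \<forall>v\<in>C <+> B.
        (case_sum id h u = case_sum id h v) \<longleftrightarrow>
        (u, v) \<in> ({(Inl (g a), Inr a) | a. a \<in> A} \<union> {(Inl (g a), Inr a) | a. a \<in> A}\<inverse>)\<^sup>*)"

text \<open>m-expansion S \<hookrightarrow> T for simplicial subsets S \<subseteq> T of Delta^p.
  The filtration is indexed by l < N with N \<in> enat (finite or infinite);
  F (l-1) is S for l = 0.\<close>
definition m_expansion :: "nat \<Rightarrow> nat \<Rightarrow> nat list set \<Rightarrow> nat list set \<Rightarrow> bool" where
  "m_expansion m p S T \<longleftrightarrow> 0 < m \<and> sub_sset p S \<and> sub_sset p T \<and> S \<subseteq> T \<and>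
    (\<exists>(N::enat) (F::nat \<Rightarrow> nat list set) (n::nat \<Rightarrow> nat) (i::nat \<Rightarrow> nat)
       (x::nat \<Rightarrow> nat list \<Rightarrow> nat list) (y::nat \<Rightarrow> nat list \<Rightarrow> nat list).
       let Fprev = (\<lambda>l. if l = 0 then S else F (l - 1)) in
       (\<forall>l. enat l < N \<longrightarrow>
          sub_sset p (F l) \<and> Fprev l \<subseteq> F l \<and>
          m \<le> n l \<and> i l \<le> n l \<and>
          (enat (Suc l) < N \<longrightarrow> n l \<le> n (Suc l)) \<and>
          ssmap (simplices (n l)) (F l) (x l) \<and>
          ssmap (horn (n l) (i l)) (Fprev l) (y l) \<and>
          is_pushout (horn (n l) (i l)) (simplices (n l)) (Fprev l) (F l) (y l) (x l)) \<and>
       T = S \<union> (\<Union>l\<in>{l. enat l < N}. F l))"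

end

theory Submission
  imports Defs
begin

text \<open>Pick a vertex k \<notin> J. A simplex of \<Delta>^n outside S has a vertex set containing J, so
  \<Delta>^n is S together with the full simplices on the sets \<sigma> \<union> {k} with J \<subseteq> \<sigma> \<subseteq> [n] - {k}.
  Attach these in order of increasing card \<sigma>. When \<sigma> \<union> {k} is attached, its facet opposite a
  vertex v \<in> J lies in S and its facet opposite v \<in> \<sigma> - J is the simplex on (\<sigma> - {v}) \<union> {k},
  attached earlier; the facet opposite k and the interior are new, since no earlier set contains \<sigma>.
  So each step glues \<Delta>^(card \<sigma>) along the horn at k, and card \<sigma> \<ge> card J = m.\<close>

section \<open>Simplicial operators and generated simplicial subsets\<close>

lemma mono_map_less_length:
  assumes "mono_map m (length xs - 1) \<theta>" and "xs \<noteq> []" and "i \<le> m"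
  shows "\<theta> i < length xs"
proof -
  have "\<theta> i \<le> length xs - 1" using assms(1,3) unfolding mono_map_def by blast
  with assms(2) show ?thesis by (cases xs) auto
qed

lemma act_in_simplices:
  assumes "xs \<in> simplices p" and "mono_map m (length xs - 1) \<theta>"
  shows "act \<theta> m xs \<in> simplices p" and "set (act \<theta> m xs) \<subseteq> set xs"
proof -
  have ne: "xs \<noteq> []" using assms(1) unfolding simplices_def by simp
  have \<theta>_lt: "\<theta> i < length xs" if "i \<le> m" for i
    using mono_map_less_length assms(2) ne that .
  have \<theta>_mono: "\<theta> i \<le> \<theta> j" if "i \<le> j" "j \<le> m" for i j
    using assms(2) that unfolding mono_map_def by blast
  show subset: "set (act \<theta> m xs) \<subseteq> set xs"
    unfolding act_def using \<theta>_lt by auto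
  have xs: "sorted xs" "set xs \<subseteq> {0..p}" using assms(1) unfolding simplices_def by auto
  have "sorted (act \<theta> m xs)"
    unfolding sorted_iff_nth_mono
  proof (intro allI impI)
    fix i j assume "i \<le> j" "j < length (act \<theta> m xs)"
    then have "i \<le> j" "j \<le> m" by (auto simp: act_def)
    with \<theta>_lt \<theta>_mono xs(1) show "act \<theta> m xs ! i \<le> act \<theta> m xs ! j"
      by (simp add: act_def sorted_nth_mono del: upt_Suc)
  qed
  moreover have "act \<theta> m xs \<noteq> []" by (simp add: act_def)
  ultimately show "act \<theta> m xs \<in> simplices p"
    using subset xs(2) unfolding simplices_def by auto
qed

lemma map_act:
  assumes "xs \<noteq> []" and "mono_map m (length xs - 1) \<theta>"
  shows "map f (act \<theta> m xs) = act \<theta> m (map f xs)"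
proof -
  have "\<theta> i < length xs" if "i \<le> m" for i
    using mono_map_less_length[OF assms(2,1) that] .
  then show ?thesis unfolding act_def by auto
qed

lemma ssmap_map:
  assumes "A \<subseteq> simplices d" and "map f ` A \<subseteq> B"
  shows "ssmap A B (map f)"
  unfolding ssmap_def
proof (intro conjI ballI allI impI)
  fix xs m \<theta> assume "xs \<in> A" and "mono_map m (length xs - 1) \<theta>"
  moreover have "xs \<noteq> []" if "xs \<in> A" for xs using assms(1) that by (auto simp: simplices_def)
  ultimately show "map f (act \<theta> m xs) = act \<theta> m (map f xs)" by (simp add: map_act)
qed (use assms(2) in auto)

definition spanned :: "nat \<Rightarrow> nat set set \<Rightarrow> nat list set" where
  "spanned n \<W> = {ys \<in> simplices n. \<exists>V\<in>\<W>. set ys \<subseteq> V}"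

lemma sub_sset_spanned: "sub_sset n (spanned n \<W>)"
  unfolding sub_sset_def
proof (intro conjI ballI allI impI)
  fix xs m \<theta> assume xs: "xs \<in> spanned n \<W>" and \<theta>: "mono_map m (length xs - 1) \<theta>"
  then obtain V where "xs \<in> simplices n" "V \<in> \<W>" "set xs \<subseteq> V" unfolding spanned_def by blast
  with act_in_simplices[OF _ \<theta>] show "act \<theta> m xs \<in> spanned n \<W>"
    unfolding spanned_def by blast
qed (auto simp: spanned_def)

lemma spanned_mono: "\<V> \<subseteq> \<W> \<Longrightarrow> spanned n \<V> \<subseteq> spanned n \<W>"
  unfolding spanned_def by blast

lemma spanned_insert:
  "spanned n (insert W \<W>) = spanned n \<W> \<union> {ys \<in> simplices n. set ys \<subseteq> W}"
  unfolding spanned_def by blast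

section \<open>Faces of \<Delta>^n as strictly monotone vertex maps\<close>

lemma strict_mono_enumeration:
  fixes W :: "nat set"
  assumes "finite W" and "W \<noteq> {}"
  obtains d E where "card W = Suc d" and "strict_mono_on {0..d} E" and "E ` {0..d} = W"
proof -
  define ws where "ws = sorted_list_of_set W"
  have len: "length ws = card W" and set: "set ws = W" and strict: "sorted_wrt (<) ws"
    using assms(1) unfolding ws_def by auto
  define d where "d = card W - 1"
  have card: "card W = Suc d" using assms unfolding d_def by (simp add: card_gt_0_iff)
  then have idx: "{0..d} = {..<length ws}" using len by (auto simp: atLeast0AtMost lessThan_Suc_atMost)
  have "strict_mono_on {0..d} (nth ws)"
    unfolding idx by (rule strict_mono_onI) (use sorted_wrt_nth_less[OF strict] in auto)
  moreover have "nth ws ` {0..d} = W"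
    unfolding idx set[symmetric] by (auto simp: in_set_conv_nth)
  ultimately show thesis using that card by blast
qed

lemma map_strict_mono_simplices:
  fixes E :: "nat \<Rightarrow> nat"
  assumes E: "strict_mono_on {0..d} E" and "E ` {0..d} \<subseteq> {0..n}"
  shows "map E ` simplices d = {ys \<in> simplices n. set ys \<subseteq> E ` {0..d}}"
proof (intro equalityI subsetI)
  fix ys assume "ys \<in> map E ` simplices d"
  then obtain xs where xs: "xs \<noteq> []" "sorted xs" "set xs \<subseteq> {0..d}" and ys: "ys = map E xs"
    unfolding simplices_def by blast
  have "sorted ys"
    unfolding ys using xs by (intro sorted_map_mono) (auto intro: strict_mono_on_leD[OF E] simp: mono_on_def)
  with xs ys assms(2) show "ys \<in> {ys \<in> simplices n. set ys \<subseteq> E ` {0..d}}"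
    unfolding simplices_def by auto
next
  fix ys assume "ys \<in> {ys \<in> simplices n. set ys \<subseteq> E ` {0..d}}"
  then have ys: "ys \<noteq> []" "sorted ys" "set ys \<subseteq> E ` {0..d}" unfolding simplices_def by auto
  define E' where "E' = the_inv_into {0..d} E"
  have inj: "inj_on E {0..d}" using E by (rule strict_mono_on_imp_inj_on)
  have E'_range: "E' v \<in> {0..d}" and E_E': "E (E' v) = v" if "v \<in> E ` {0..d}" for v
    using the_inv_into_into[OF inj that order_refl] f_the_inv_into_f[OF inj that]
    unfolding E'_def by auto
  have "mono_on (E ` {0..d}) E'"
  proof (rule mono_onI)
    fix v w assume "v \<in> E ` {0..d}" "w \<in> E ` {0..d}" "v \<le> w"
    then show "E' v \<le> E' w"
      using E_E' E'_range strict_mono_onD[OF E, of "E' w" "E' v"] by (metis leI leD)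
  qed
  then have "sorted (map E' ys)" using ys by (auto intro: sorted_map_mono mono_on_subset)
  moreover have "map E (map E' ys) = ys" using ys(3) E_E' by (induction ys) auto
  ultimately show "ys \<in> map E ` simplices d"
    using ys E'_range unfolding simplices_def by (intro rev_image_eqI[of "map E' ys"]) auto
qed

lemma inj_on_map_strict_mono:
  fixes E :: "nat \<Rightarrow> nat"
  assumes "strict_mono_on {0..d} E"
  shows "inj_on (map E) (simplices d)"
proof (rule inj_onI)
  fix xs ys assume "xs \<in> simplices d" "ys \<in> simplices d" and eq: "map E xs = map E ys"
  then have "set xs \<union> set ys \<subseteq> {0..d}" unfolding simplices_def by auto
  with strict_mono_on_imp_inj_on[OF assms] have "inj_on E (set xs \<union> set ys)"
    by (rule inj_on_subset)
  with eq show "xs = ys" by (simp add: inj_on_map_eq_map)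
qed

lemma horn_iff_missing_vertex:
  fixes E :: "nat \<Rightarrow> nat"
  assumes E: "strict_mono_on {0..d} E" and "xs \<in> simplices d"
  shows "xs \<in> horn d i \<longleftrightarrow> \<not> E ` ({0..d} - {i}) \<subseteq> set (map E xs)"
proof -
  have inj: "inj_on E {0..d}" using E by (rule strict_mono_on_imp_inj_on)
  have "xs \<in> horn d i \<longleftrightarrow> (\<exists>j\<in>{0..d} - {i}. j \<notin> set xs)"
    using assms(2) unfolding horn_def face_def by blast
  also have "\<dots> \<longleftrightarrow> (\<exists>j\<in>{0..d} - {i}. E j \<notin> E ` set xs)"
    using assms(2) inj_on_image_mem_iff[OF inj] unfolding simplices_def by auto
  finally show ?thesis by auto
qed

section \<open>Horn pushouts and expansions\<close>

lemma is_pushoutI: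
  assumes "A \<subseteq> B" and "C \<subseteq> P" and "\<forall>a\<in>A. h a = g a" and "g ` A \<subseteq> C" and "P = C \<union> h ` B"
    and "inj_on h (B - A)" and "h ` (B - A) \<inter> C = {}"
  shows "is_pushout A B C P g h"
proof -
  define R where "R = {(Inl (g a), Inr a) | a. a \<in> A} \<union> {(Inl (g a), Inr a) | a. a \<in> A}\<inverse>"
  define \<nu> where "\<nu> u = (case u of Inl c \<Rightarrow> Inl c | Inr b \<Rightarrow> if b \<in> A then Inl (g b) else Inr b)"
    for u :: "nat list + nat list"
  \<comment> \<open>\<nu> picks in each class of R^* a representative in Inl ` C \<union> Inr ` (B - A), where case_sum id h is injective\<close>
  have \<nu>_R: "(u, \<nu> u) \<in> R\<^sup>*" "(\<nu> u, u) \<in> R\<^sup>*" for u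
    unfolding \<nu>_def R_def by (cases u; auto)+
  have R_\<nu>: "\<nu> u = \<nu> v" if "(u, v) \<in> R\<^sup>*" for u v
    using that by (induction rule: rtrancl_induct) (auto simp: R_def \<nu>_def)
  have R_iff_\<nu>: "(u, v) \<in> R\<^sup>* \<longleftrightarrow> \<nu> u = \<nu> v" for u v
    using R_\<nu> \<nu>_R by (metis rtrancl_trans)
  have fold_\<nu>: "case_sum id h u = case_sum id h (\<nu> u)"
    and \<nu>_normal: "\<nu> u \<in> Inl ` C \<union> Inr ` (B - A)" if "u \<in> C <+> B" for u
    using that assms(3,4) unfolding \<nu>_def by (auto split: sum.split)
  have "inj_on (case_sum id h) (Inl ` C \<union> Inr ` (B - A))"
    using assms(6,7) by (auto simp: inj_on_def)
  then have "case_sum id h u = case_sum id h v \<longleftrightarrow> (u, v) \<in> R\<^sup>*" if "u \<in> C <+> B" "v \<in> C <+> B" for u v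
    unfolding R_iff_\<nu> using that fold_\<nu> \<nu>_normal by (metis inj_on_eq_iff)
  with assms(1,2,3,5) show ?thesis unfolding is_pushout_def R_def by blast
qed

text \<open>One step F_(l-1) \<subseteq> F_l of an expansion, with x = y and n_l = d.\<close>

definition attaches_horn ::
  "nat \<Rightarrow> nat \<Rightarrow> (nat list \<Rightarrow> nat list) \<Rightarrow> nat list set \<Rightarrow> nat list set \<Rightarrow> bool" where
  "attaches_horn d i x C P \<longleftrightarrow> i \<le> d \<and> ssmap (simplices d) P x \<and> ssmap (horn d i) C x \<and>
     is_pushout (horn d i) (simplices d) C P x x"

lemma attaches_horn_spanned:
  fixes W :: "nat set"
  assumes W: "W \<subseteq> {0..n}" "k \<in> W"
    and horn_covered: "\<And>v. v \<in> W - {k} \<Longrightarrow> \<exists>V\<in>\<W>. W - {v} \<subseteq> V"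
    and missing_face: "\<And>V. V \<in> \<W> \<Longrightarrow> \<not> W - {k} \<subseteq> V"
  shows "\<exists>i x. attaches_horn (card W - 1) i x (spanned n \<W>) (spanned n (insert W \<W>))"
proof -
  have "finite W" using W(1) finite_subset by blast
  then obtain d E where card: "card W = Suc d" and E: "strict_mono_on {0..d} E" and W_E: "E ` {0..d} = W"
    using strict_mono_enumeration W(2) by blast
  obtain i where i: "i \<le> d" "E i = k" using W(2) W_E by auto
  have image: "map E ` simplices d = {ys \<in> simplices n. set ys \<subseteq> W}"
    using map_strict_mono_simplices[OF E] W(1) W_E by simp
  have "E ` ({0..d} - {i}) = W - {k}"
    using W_E i inj_on_image_set_diff[OF strict_mono_on_imp_inj_on[OF E], of "{0..d}" "{i}"] by auto
  then have horn_iff: "xs \<in> horn d i \<longleftrightarrow> \<not> W - {k} \<subseteq> set (map E xs)" if "xs \<in> simplices d" for xs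
    using horn_iff_missing_vertex[OF E that] by simp
  have horn_sub: "horn d i \<subseteq> simplices d" unfolding horn_def face_def by blast
  have horn_image: "map E ` horn d i \<subseteq> spanned n \<W>"
  proof
    fix ys assume "ys \<in> map E ` horn d i"
    then obtain xs where xs: "xs \<in> horn d i" "ys = map E xs" by blast
    then have "ys \<in> map E ` simplices d" using horn_sub by blast
    then have ys: "ys \<in> simplices n" "set ys \<subseteq> W" unfolding image by auto
    have "\<not> W - {k} \<subseteq> set ys" using horn_iff xs horn_sub by blast
    then obtain v where "v \<in> W - {k}" "v \<notin> set ys" by blast
    moreover obtain V where "V \<in> \<W>" "W - {v} \<subseteq> V" using horn_covered calculation(1) by blast
    ultimately show "ys \<in> spanned n \<W>" using ys unfolding spanned_def by blast
  qed
  have disjoint: "map E ` (simplices d - horn d i) \<inter> spanned n \<W> = {}"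
  proof -
    have "map E xs \<notin> spanned n \<W>" if "xs \<in> simplices d" "xs \<notin> horn d i" for xs
      using horn_iff[OF that(1)] that(2) missing_face unfolding spanned_def by blast
    then show ?thesis by blast
  qed
  have "is_pushout (horn d i) (simplices d) (spanned n \<W>) (spanned n (insert W \<W>)) (map E) (map E)"
  proof (rule is_pushoutI)
    show "spanned n (insert W \<W>) = spanned n \<W> \<union> map E ` simplices d"
      unfolding spanned_insert image ..
    show "inj_on (map E) (simplices d - horn d i)"
      using inj_on_map_strict_mono[OF E] by (rule inj_on_subset) blast
  qed (use horn_sub horn_image disjoint spanned_mono[OF subset_insertI] in auto)
  moreover have "ssmap (simplices d) (spanned n (insert W \<W>)) (map E)"
    by (rule ssmap_map) (auto simp: image spanned_insert)
  moreover have "ssmap (horn d i) (spanned n \<W>) (map E)"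
    using horn_sub horn_image by (rule ssmap_map)
  ultimately show ?thesis using i(1) card unfolding attaches_horn_def by auto
qed

lemma m_expansion_of_chain:
  fixes F :: "nat \<Rightarrow> nat list set" and d :: "nat \<Rightarrow> nat"
  assumes "0 < m"
    and sub: "\<And>l. l \<le> N \<Longrightarrow> sub_sset p (F l)"
    and dim: "\<And>l. l < N \<Longrightarrow> m \<le> d l"
    and dim_mono: "\<And>l. Suc l < N \<Longrightarrow> d l \<le> d (Suc l)"
    and attach: "\<And>l. l < N \<Longrightarrow> \<exists>i x. attaches_horn (d l) i x (F l) (F (Suc l))"
  shows "m_expansion m p (F 0) (F N)"
proof -
  obtain i x where att: "\<And>l. l < N \<Longrightarrow> attaches_horn (d l) (i l) (x l) (F l) (F (Suc l))"
    using attach by metis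
  have step: "F l \<subseteq> F (Suc l)" if "l < N" for l
    using att[OF that] unfolding attaches_horn_def is_pushout_def by blast
  have chain: "F l \<subseteq> F N" if "l \<le> N" for l
    using that by (induction N rule: dec_induct) (use step in auto)
  have below_N: "{l. enat l < enat N} = {..<N}" by auto
  have last: "F N = F 0 \<union> (\<Union>l<N. F (Suc l))"
  proof (cases N)
    case (Suc N')
    then have "F N \<subseteq> (\<Union>l<N. F (Suc l))" by blast
    moreover have "F (Suc l) \<subseteq> F N" if "l < N" for l using chain that by simp
    ultimately show ?thesis using chain[of 0] by blast
  qed simp
  show ?thesis
    unfolding m_expansion_def Let_def
    by (intro conjI; (rule exI[of _ "enat N"], rule exI[of _ "\<lambda>l. F (Suc l)"], rule exI[of _ d],
        rule exI[of _ i], rule exI[of _ x], rule exI[of _ x])?)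
      (use assms(1) sub dim dim_mono att step chain last[symmetric]
        in \<open>auto simp: attaches_horn_def Suc_leI below_N\<close>)
qed

section \<open>Filling \<Delta>^n from a union of facets\<close>

locale face_filling =
  fixes n k :: nat and J :: "nat set" and L :: "nat set list"
  assumes k_le_n: "k \<le> n" and k_notin_J: "k \<notin> J"
    and set_L: "set L = {\<sigma>. J \<subseteq> \<sigma> \<and> \<sigma> \<subseteq> {0..n} - {k}}"
    and distinct_L: "distinct L"
    and sorted_card_L: "sorted (map card L)"
begin

text \<open>The vertex sets spanning F_t: the facets making up S and the first t attached simplices.\<close>

definition stage :: "nat \<Rightarrow> nat set set" where
  "stage t = (\<lambda>j. {0..n} - {j}) ` J \<union> (\<lambda>s. insert k (L ! s)) ` {..<t}"

lemma nth_L: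
  assumes "l < length L"
  shows "J \<subseteq> L ! l" and "L ! l \<subseteq> {0..n} - {k}" and "finite (L ! l)"
proof -
  have "L ! l \<in> set L" using assms by (rule nth_mem)
  then show "J \<subseteq> L ! l" and sub: "L ! l \<subseteq> {0..n} - {k}" unfolding set_L by auto
  show "finite (L ! l)" using sub by (rule finite_subset) simp
qed

lemma card_nth_L_mono: "s \<le> l \<Longrightarrow> l < length L \<Longrightarrow> card (L ! s) \<le> card (L ! l)"
  using sorted_nth_mono[OF sorted_card_L, of s l] by simp

lemma spanned_stage_0: "spanned n (stage 0) = (\<Union>j\<in>J. face n j)"
proof -
  have "set ys \<subseteq> {0..n} - {j} \<longleftrightarrow> j \<notin> set ys" if "ys \<in> simplices n" for ys j
    using that unfolding simplices_def by blast
  then show ?thesis unfolding stage_def spanned_def face_def by blast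
qed

lemma spanned_stage_length: "spanned n (stage (length L)) = simplices n"
proof (intro equalityI subsetI)
  fix xs assume xs: "xs \<in> simplices n"
  then have xs_n: "set xs \<subseteq> {0..n}" unfolding simplices_def by blast
  show "xs \<in> spanned n (stage (length L))"
  proof (cases "J \<subseteq> set xs")
    case True
    with xs_n k_notin_J have "set xs - {k} \<in> set L" unfolding set_L by blast
    then obtain l where "l < length L" "L ! l = set xs - {k}" by (auto simp: in_set_conv_nth)
    then have "insert k (L ! l) \<in> stage (length L)" "set xs \<subseteq> insert k (L ! l)"
      unfolding stage_def by auto
    with xs show ?thesis unfolding spanned_def by blast
  next
    case False
    then obtain j where "j \<in> J" "set xs \<subseteq> {0..n} - {j}" using xs_n by blast
    with xs show ?thesis unfolding spanned_def stage_def by blast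
  qed
qed (simp add: spanned_def)

lemma stage_Suc: "stage (Suc l) = insert (insert k (L ! l)) (stage l)"
  unfolding stage_def lessThan_Suc by blast

lemma attaches_stage:
  assumes l: "l < length L"
  shows "\<exists>i x. attaches_horn (card (L ! l)) i x (spanned n (stage l)) (spanned n (stage (Suc l)))"
proof -
  define \<sigma> where "\<sigma> = L ! l"
  have \<sigma>: "J \<subseteq> \<sigma>" "\<sigma> \<subseteq> {0..n} - {k}" "finite \<sigma>" using nth_L[OF l] unfolding \<sigma>_def by auto
  have horn_covered: "\<exists>V\<in>stage l. insert k \<sigma> - {v} \<subseteq> V" if v: "v \<in> insert k \<sigma> - {k}" for v
  proof (cases "v \<in> J")
    case True
    then have "{0..n} - {v} \<in> stage l" unfolding stage_def by blast
    moreover have "insert k \<sigma> - {v} \<subseteq> {0..n} - {v}" using \<sigma>(2) k_le_n by auto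
    ultimately show ?thesis by blast
  next
    case False
    with \<sigma> v have "\<sigma> - {v} \<in> set L" unfolding set_L by auto
    then obtain s where s: "s < length L" "L ! s = \<sigma> - {v}" by (auto simp: in_set_conv_nth)
    have "v \<in> \<sigma>" using v by blast
    from card_Diff1_less[OF \<sigma>(3) this] have "card (L ! s) < card (L ! l)"
      using s(2) unfolding \<sigma>_def by simp
    then have "s < l" using card_nth_L_mono[of l s] s(1) by (cases "s < l") auto
    moreover have "insert k \<sigma> - {v} = insert k (L ! s)" using s(2) v by auto
    ultimately show ?thesis unfolding stage_def by blast
  qed
  have missing_face: "\<not> insert k \<sigma> - {k} \<subseteq> V" if V: "V \<in> stage l" for V
  proof
    assume sub: "insert k \<sigma> - {k} \<subseteq> V"
    then have \<sigma>_sub: "\<sigma> \<subseteq> V" using \<sigma>(2) by auto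
    from V consider (face) j where "j \<in> J" "V = {0..n} - {j}"
      | (earlier) s where "s < l" "V = insert k (L ! s)"
      unfolding stage_def by blast
    then show False
    proof cases
      case face
      then show False using \<sigma>(1) \<sigma>_sub by auto
    next
      case earlier
      with \<sigma>_sub \<sigma>(2) have "\<sigma> \<subseteq> L ! s" by auto
      moreover have "card (L ! s) \<le> card \<sigma>" using card_nth_L_mono[of s l] earlier l unfolding \<sigma>_def by simp
      moreover have "finite (L ! s)" using nth_L(3)[of s] earlier l by simp
      ultimately have "L ! s = L ! l" using card_seteq unfolding \<sigma>_def by blast
      then show False using distinct_L earlier l by (simp add: nth_eq_iff_index_eq)
    qed
  qed
  have "k \<notin> \<sigma>" using \<sigma>(2) by blast
  then have card: "card (insert k \<sigma>) - 1 = card (L ! l)" using \<sigma>(3) unfolding \<sigma>_def by simp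
  have "insert k \<sigma> \<subseteq> {0..n}" using \<sigma>(2) k_le_n by auto
  from attaches_horn_spanned[OF this insertI1 horn_covered missing_face]
  have "\<exists>i x. attaches_horn (card (insert k \<sigma>) - 1) i x (spanned n (stage l)) (spanned n (stage (Suc l)))"
    unfolding stage_Suc \<sigma>_def .
  then show ?thesis unfolding card .
qed

end

theorem lemma3p8:
  fixes m n :: nat and J :: "nat set"
  assumes "0 < m" and "m \<le> n"
    and "J \<subseteq> {0..n}" and "card J = m"
  shows "m_expansion m n (\<Union>j\<in>J. face n j) (simplices n)"
proof -
  have "card J < card {0..n}" using assms(2,4) by simp
  then have "J \<noteq> {0..n}" by blast
  then obtain k where k: "k \<in> {0..n}" "k \<notin> J" using assms(3) by blast
  have fin: "finite {\<sigma>. J \<subseteq> \<sigma> \<and> \<sigma> \<subseteq> {0..n} - {k}}"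
    by (rule finite_subset[of _ "Pow {0..n}"]) blast+
  obtain L0 where L0: "set L0 = {\<sigma>. J \<subseteq> \<sigma> \<and> \<sigma> \<subseteq> {0..n} - {k}}" "distinct L0"
    using finite_distinct_list[OF fin] by blast
  define L where "L = sort_key card L0"
  interpret face_filling n k J L
  proof
    show "set L = {\<sigma>. J \<subseteq> \<sigma> \<and> \<sigma> \<subseteq> {0..n} - {k}}" "distinct L" "sorted (map card L)"
      using L0 unfolding L_def by simp_all
  qed (use k in auto)
  have "m_expansion m n (spanned n (stage 0)) (spanned n (stage (length L)))"
  proof (rule m_expansion_of_chain[where d = "\<lambda>l. card (L ! l)"])
    show "m \<le> card (L ! l)" if "l < length L" for l
      using card_mono[OF nth_L(3) nth_L(1)] that assms(4) by blast
    show "\<exists>i x. attaches_horn (card (L ! l)) i x (spanned n (stage l)) (spanned n (stage (Suc l)))"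
      if "l < length L" for l
      using that by (rule attaches_stage)
  qed (simp_all add: assms(1) sub_sset_spanned card_nth_L_mono)
  then show ?thesis unfolding spanned_stage_0 spanned_stage_length .
qed

end
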